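(* For every finite chain ring $R$ and every $k\ge1$, the linear simplex code $\mathcal{S}_k^\beta$ is optimal with respect to the Griesmer bound, i.e., its length $n$ satisfies $n=\sum_{i=0}^{k(\mathcal{S}_k^\beta)-1}\left\lceil\frac{d_H(\mathcal{S}_k^\beta)}{q^i}\right\rceil$.
   Context: Let $R$ be a finite commutative chain ring with maximal ideal $\langle\gamma\rangle$, nilpotency index $s$ and residue field $R/\langle\gamma\rangle\cong\mathbb{F}_q$. Fix coset representatives $T=\{e_0,\dots,e_{q-1}\}$ with $e_0=0,e_1=1$, ordered $e_0<\dots<e_{q-1}$; each $r\in R$ is uniquely $\sum_{i=0}^{s-1}r_i\gamma^i$, $r_i\in T$; order $R$ by $x>y$ iff $x_i>y_i$ in $T$ for the largest $i$ with $x_i\neq y_i$; list $R=\{\rho_0,\dots,\rho_{q^s-1}\}$ increasingly. $\mathbf{a}^{(m)}$ is the constant vector of length $m$. Define $G_1^\alpha=(\rho_0\ \cdots\ \rho_{q^s-1})$ and, for $k>1$, $G_k^\alpha$ as the matrix of $q^s$ column blocks, the $j$-th having first row $\boldsymbol{\rho_j}^{(q^{s(k-1)})}$ and $G_{k-1}^\alpha$ below. List $\langle\gamma\rangle$ increasingly as $a_0\gamma<\dots<a_{q^{s-1}-1}\gamma$. Define $G_1^\beta=(1)$ and, for $k>1$, $G_k^\beta$ as the matrix with column blocks: first a block with first row $\mathbf{1}^{(q^{s(k-1)})}$ and $G_{k-1}^\alpha$ below; then for each $j=0,\dots,q^{s-1}-1$ a block with first row the constant vector with entry $a_j\gamma$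 and $G_{k-1}^\beta$ below. $\mathcal{S}_k^\beta$ is the $R$-submodule generated by the rows of $G_k^\beta$. For a linear code $\mathcal{C}\subseteq R^n$, $d_H(\mathcal{C})$ is its minimum Hamming distance and $k(\mathcal{C})$ is the minimum rank of a free $R$-submodule $\mathcal{C}'\subseteq R^n$ with $\mathcal{C}\subseteq\mathcal{C}'$. The Griesmer bound states $n\ge\sum_{i=0}^{k(\mathcal{C})-1}\lceil d_H(\mathcal{C})/q^i\rceil$; a code is optimal with respect to it when equality holds. *)

theory Defs
  imports Complex_Main
begin

definition is_ideal :: "'a::comm_ring_1 set \<Rightarrow> bool" where
  "is_ideal I \<longleftrightarrow> 0 \<in> I \<and> (\<forall>x\<in>I. \<forall>y\<in>I. x + y \<in> I) \<and> (\<forall>x\<in>I. \<forall>r. r * x \<in> I)"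

definition maximal_ideal :: "'a::comm_ring_1 set \<Rightarrow> bool" where
  "maximal_ideal M \<longleftrightarrow> is_ideal M \<and> M \<noteq> UNIV \<and>
     (\<forall>J. is_ideal J \<and> M \<subseteq> J \<longrightarrow> J = M \<or> J = UNIV)"

definition chain_ring :: "'a::comm_ring_1 itself \<Rightarrow> bool" where
  "chain_ring _ \<longleftrightarrow> (\<forall>I J :: 'a set. is_ideal I \<and> is_ideal J \<longrightarrow> I \<subseteq> J \<or> J \<subseteq> I)"

definition pideal :: "'a::comm_ring_1 \<Rightarrow> 'a set" where
  "pideal g = range (\<lambda>r. r * g)"

text \<open>T (a list e_0,...,e_{q-1}, ordered by list position) is a complete, irredundant system
  of representatives of the cosets of the ideal generated by g.\<close>
definition coset_reps :: "'a::comm_ring_1 \<Rightarrow> 'a list \<Rightarrow> bool" where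
  "coset_reps g T \<longleftrightarrow> (\<forall>x. \<exists>!i. i < length T \<and> x - T ! i \<in> pideal g)"

text \<open>rho g s T j is the element with digits r_i = e_{(j div q^i) mod q}, i.e. the j-th
  element of R in the order (most significant digit = highest power of g).\<close>
definition rho :: "'a::comm_ring_1 \<Rightarrow> nat \<Rightarrow> 'a list \<Rightarrow> nat \<Rightarrow> 'a" where
  "rho g s T j = (\<Sum>i<s. T ! ((j div length T ^ i) mod length T) * g ^ i)"

text \<open>The elements of the ideal generated by g, listed increasingly: a_0 g < a_1 g < ...\<close>
definition gamma_list :: "'a::comm_ring_1 \<Rightarrow> nat \<Rightarrow> 'a list \<Rightarrow> 'a list" where
  "gamma_list g s T = filter (\<lambda>x. x \<in> pideal g) (map (rho g s T) [0..<length T ^ s])"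

definition ncols :: "'a list list \<Rightarrow> nat" where
  "ncols M = length (hd M)"

definition hcat :: "'a list list list \<Rightarrow> 'a list list" where
  "hcat Ms = map (\<lambda>i. concat (map (\<lambda>M. M ! i) Ms)) [0..<length (hd Ms)]"

fun Galpha :: "'a::comm_ring_1 \<Rightarrow> nat \<Rightarrow> 'a list \<Rightarrow> nat \<Rightarrow> 'a list list" where
  "Galpha g s T 0 = []"
| "Galpha g s T (Suc 0) = [map (rho g s T) [0..<length T ^ s]]"
| "Galpha g s T (Suc (Suc k)) =
     hcat (map (\<lambda>j. replicate (length T ^ (s * Suc k)) (rho g s T j) # Galpha g s T (Suc k))
               [0..<length T ^ s])"

fun Gbeta :: "'a::comm_ring_1 \<Rightarrow> nat \<Rightarrow> 'a list \<Rightarrow> nat \<Rightarrow> 'a list list" where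
  "Gbeta g s T 0 = []"
| "Gbeta g s T (Suc 0) = [[1]]"
| "Gbeta g s T (Suc (Suc k)) =
     hcat ((replicate (length T ^ (s * Suc k)) 1 # Galpha g s T (Suc k)) #
           map (\<lambda>a. replicate (ncols (Gbeta g s T (Suc k))) a # Gbeta g s T (Suc k))
               (gamma_list g s T))"

definition lincomb :: "nat \<Rightarrow> 'a::comm_ring_1 list \<Rightarrow> 'a list list \<Rightarrow> 'a list" where
  "lincomb n c vs = map (\<lambda>l. \<Sum>i<length vs. c ! i * vs ! i ! l) [0..<n]"

definition rspan :: "nat \<Rightarrow> 'a::comm_ring_1 list list \<Rightarrow> 'a list set" where
  "rspan n vs = {lincomb n c vs | c. length c = length vs}"

definition lin_indep :: "nat \<Rightarrow> 'a::comm_ring_1 list list \<Rightarrow> bool" where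
  "lin_indep n vs \<longleftrightarrow> (\<forall>c. length c = length vs \<and> lincomb n c vs = replicate n 0
                           \<longrightarrow> (\<forall>i<length vs. c ! i = 0))"

definition free_submodule_rank :: "nat \<Rightarrow> 'a::comm_ring_1 list set \<Rightarrow> nat \<Rightarrow> bool" where
  "free_submodule_rank n C' r \<longleftrightarrow>
     (\<exists>vs. length vs = r \<and> (\<forall>v\<in>set vs. length v = n) \<and> lin_indep n vs \<and> rspan n vs = C')"

definition code_rank :: "nat \<Rightarrow> 'a::comm_ring_1 list set \<Rightarrow> nat" where
  "code_rank n C = (LEAST r. \<exists>C'. C \<subseteq> C' \<and> free_submodule_rank n C' r)"

definition hamming_dist :: "'a list \<Rightarrow> 'a list \<Rightarrow> nat" where
  "hamming_dist x y = card {i. i < length x \<and> x ! i \<noteq> y ! i}"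

definition min_dist :: "'a list set \<Rightarrow> nat" where
  "min_dist C = Min {hamming_dist x y | x y. x \<in> C \<and> y \<in> C \<and> x \<noteq> y}"

definition Sbeta :: "'a::comm_ring_1 \<Rightarrow> nat \<Rightarrow> 'a list \<Rightarrow> nat \<Rightarrow> 'a list set" where
  "Sbeta g s T k = rspan (ncols (Gbeta g s T k)) (Gbeta g s T k)"

end

theory Submission
  imports Defs
begin

(* Let M = (g) be the maximal ideal, |R/M| = q. The columns of G_k^beta are, each exactly once,
  the vectors of R^k whose first coordinate outside M equals 1; so the codeword of a message c
  has weight wt(c) = #{v column : c.v ~= 0}. Scaling these columns by the units of R gives every
  vector outside M^k exactly once, hence |R - M| wt(c) = N(R^k) - N(M^k), where N(X) counts the
  w in X with c.w ~= 0. The image I of w |-> c.w is a nonzero ideal, the image of M^k is gI and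
  |I| = q |gI|; counting fibres of this linear form turns the identity into
  wt(c) >= q^(s(k-1)), with equality for c = (g^(s-1), 0, ..., 0). The code is free of rank k
  and has q^(sk) words, so k(C) = k, d = q^(s(k-1)), and the length
  n = sum_(i<k) q^(s(k-1)-i) is exactly the Griesmer sum. *)

lemma card_eq_card_image_mult_card_kernel:
  fixes f :: "'b \<Rightarrow> 'c::ab_group_add"
  assumes fin: "finite A"
    and plus_closed: "\<And>x y. x \<in> A \<Longrightarrow> y \<in> A \<Longrightarrow> p x y \<in> A"
    and minus_closed: "\<And>x y. x \<in> A \<Longrightarrow> y \<in> A \<Longrightarrow> m x y \<in> A"
    and f_plus: "\<And>x y. x \<in> A \<Longrightarrow> y \<in> A \<Longrightarrow> f (p x y) = f x + f y"
    and f_minus: "\<And>x y. x \<in> A \<Longrightarrow> y \<in> A \<Longrightarrow> f (m x y) = f x - f y"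
    and plus_minus: "\<And>x y. x \<in> A \<Longrightarrow> y \<in> A \<Longrightarrow> p (m x y) y = x"
    and minus_plus: "\<And>x y. x \<in> A \<Longrightarrow> y \<in> A \<Longrightarrow> m (p x y) y = x"
  shows "card A = card (f ` A) * card {x\<in>A. f x = 0}"
proof -
  have fibre: "card {x\<in>A. f x = b} = card {x\<in>A. f x = 0}" if b: "b \<in> f ` A" for b
  proof -
    obtain x0 where x0: "x0 \<in> A" "f x0 = b" using b by auto
    have "bij_betw (\<lambda>z. p z x0) {x\<in>A. f x = 0} {x\<in>A. f x = b}"
      by (rule bij_betw_byWitness[where f' = "\<lambda>x. m x x0"])
        (use x0 plus_closed minus_closed f_plus f_minus plus_minus minus_plus in auto)
    then show ?thesis by (simp add: bij_betw_same_card)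
  qed
  have "card A = card (\<Union>b\<in>f ` A. {x\<in>A. f x = b})"
    by (rule arg_cong[where f = card]) auto
  also have "\<dots> = (\<Sum>b\<in>f ` A. card {x\<in>A. f x = b})"
    by (rule card_UN_disjoint) (use fin in auto)
  also have "\<dots> = (\<Sum>b\<in>f ` A. card {x\<in>A. f x = 0})"
    using fibre by (rule sum.cong[OF refl])
  finally show ?thesis by simp
qed

lemma card_filter_add_card_filter_not:
  "finite A \<Longrightarrow> card {x\<in>A. P x} + card {x\<in>A. \<not> P x} = card A"
  by (subst card_Un_disjoint[symmetric]) (auto intro: arg_cong[where f = card])

lemma mem_pideal_iff: "x \<in> pideal a \<longleftrightarrow> (\<exists>r. x = r * a)"
  unfolding pideal_def by auto

lemma is_ideal_pideal: "is_ideal (pideal a)"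
  unfolding is_ideal_def
proof (intro conjI ballI allI)
  show "0 \<in> pideal a" unfolding mem_pideal_iff by (intro exI[of _ 0]) simp
next
  fix x y assume "x \<in> pideal a" "y \<in> pideal a"
  then obtain r1 r2 where "x = r1 * a" "y = r2 * a" unfolding mem_pideal_iff by blast
  then have "x + y = (r1 + r2) * a" by (simp add: distrib_right)
  then show "x + y \<in> pideal a" unfolding mem_pideal_iff by blast
next
  fix x r assume "x \<in> pideal a"
  then obtain r1 where "x = r1 * a" unfolding mem_pideal_iff by blast
  then have "r * x = (r * r1) * a" by (simp add: mult.assoc)
  then show "r * x \<in> pideal a" unfolding mem_pideal_iff by blast
qed

lemma is_ideal_diff:
  assumes "is_ideal I" "x \<in> I" "y \<in> I"
  shows "x - y \<in> I"
proof -
  have "x + (-1) * y \<in> I" using assms unfolding is_ideal_def by blast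
  then show ?thesis by simp
qed

lemma digit_add_mult_power:
  fixes b :: nat
  assumes "b > 0" "i < m"
  shows "((j + d * b ^ m) div b ^ i) mod b = (j div b ^ i) mod b"
proof -
  have "b ^ m = b ^ i * (b * b ^ (m - Suc i))"
    using assms(2) by (simp flip: power_Suc power_add)
  then have "j + d * b ^ m = j + (b * (d * b ^ (m - Suc i))) * b ^ i"
    by (simp add: ac_simps)
  also have "\<dots> div b ^ i = b * (d * b ^ (m - Suc i)) + j div b ^ i"
    by (rule div_mult_self1) (use assms(1) in simp)
  finally show ?thesis by simp
qed

section \<open>Matrices as lists of rows\<close>

definition col :: "'b list list \<Rightarrow> nat \<Rightarrow> 'b list" where
  "col G j = map (\<lambda>row. row ! j) G"

definition cols :: "'b list list \<Rightarrow> 'b list list" where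
  "cols G = map (col G) [0..<ncols G]"

definition is_matrix :: "nat \<Rightarrow> 'b list list \<Rightarrow> bool" where
  "is_matrix r G \<longleftrightarrow> length G = r \<and> 0 < r \<and> (\<forall>row\<in>set G. length row = ncols G)"

text \<open>\<^const>\<open>hcat\<close> reads the number of rows off the first block; fixing it instead lets the
  concatenation unfold block by block.\<close>
definition hcat_rows :: "nat \<Rightarrow> 'b list list list \<Rightarrow> 'b list list" where
  "hcat_rows r Ms = map (\<lambda>i. concat (map (\<lambda>M. M ! i) Ms)) [0..<r]"

lemma length_cols [simp]: "length (cols G) = ncols G"
  unfolding cols_def by simp

lemma
  assumes M: "is_matrix r M"
  shows col_hcat_rows_Cons_left: "j < ncols M \<Longrightarrow> col (hcat_rows r (M # Ms)) j = col M j"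
    and col_hcat_rows_Cons_right: "col (hcat_rows r (M # Ms)) (ncols M + j) = col (hcat_rows r Ms) j"
proof -
  have row_length: "\<And>i. i < r \<Longrightarrow> length (M ! i) = ncols M"
    using M unfolding is_matrix_def by auto
  have col: "col (hcat_rows r (M # Ms)) j = map (\<lambda>i. (M ! i @ hcat_rows r Ms ! i) ! j) [0..<r]" for j
    unfolding col_def hcat_rows_def by simp
  show "col (hcat_rows r (M # Ms)) j = col M j" if "j < ncols M"
  proof -
    have "col (hcat_rows r (M # Ms)) j = map (\<lambda>i. M ! i ! j) [0..<r]"
      unfolding col using row_length that by (intro map_cong) (auto simp: nth_append)
    then show ?thesis using M unfolding is_matrix_def col_def by (simp add: list_eq_iff_nth_eq)
  qed
  show "col (hcat_rows r (M # Ms)) (ncols M + j) = col (hcat_rows r Ms) j"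
    unfolding col using row_length by (auto simp: nth_append col_def hcat_rows_def intro!: map_cong)
qed

lemma cols_hcat_rows:
  assumes "\<forall>M\<in>set Ms. is_matrix r M"
  shows "map (col (hcat_rows r Ms)) [0..<sum_list (map ncols Ms)] = concat (map cols Ms)"
  using assms
proof (induction Ms)
  case Nil
  then show ?case by simp
next
  case (Cons M Ms)
  define a where "a = ncols M"
  define b where "b = sum_list (map ncols Ms)"
  have M: "is_matrix r M" using Cons.prems by simp
  have "[0..<a + b] = [0..<a] @ map (\<lambda>j. a + j) [0..<b]"
  proof -
    have "map (\<lambda>j. a + j) [0..<b] = [a..<a + b]" by (induction b) auto
    then show ?thesis using upt_add_eq_append[of 0 a b] by simp
  qed
  moreover have "map (col (hcat_rows r (M # Ms))) [0..<a] = cols M"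
    using col_hcat_rows_Cons_left[OF M] unfolding cols_def a_def by simp
  moreover have "map (col (hcat_rows r (M # Ms))) (map (\<lambda>j. a + j) [0..<b])
      = map (col (hcat_rows r Ms)) [0..<b]"
    using col_hcat_rows_Cons_right[OF M] unfolding a_def by simp
  ultimately show ?case using Cons.IH Cons.prems unfolding a_def b_def by simp
qed

lemma hcat_eq_hcat_rows:
  assumes "Ms \<noteq> []" "\<forall>M\<in>set Ms. is_matrix r M"
  shows "hcat Ms = hcat_rows r Ms"
proof -
  have "length (hd Ms) = r" using assms unfolding is_matrix_def by simp
  then show ?thesis unfolding hcat_def hcat_rows_def by simp
qed

lemma
  assumes ne: "Ms \<noteq> []" and blocks: "\<forall>M\<in>set Ms. is_matrix r M"
  shows is_matrix_hcat: "is_matrix r (hcat Ms)"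
    and cols_hcat: "cols (hcat Ms) = concat (map cols Ms)"
    and ncols_hcat: "ncols (hcat Ms) = sum_list (map ncols Ms)"
proof -
  have r: "r > 0" using ne blocks unfolding is_matrix_def by (cases Ms) auto
  have H: "hcat Ms = hcat_rows r Ms" using assms by (rule hcat_eq_hcat_rows)
  have row_length: "length (hcat_rows r Ms ! i) = sum_list (map ncols Ms)" if "i < r" for i
  proof -
    have "length (hcat_rows r Ms ! i) = sum_list (map (\<lambda>M. length (M ! i)) Ms)"
      using that unfolding hcat_rows_def by (simp add: length_concat comp_def)
    also have "\<dots> = sum_list (map ncols Ms)"
      using blocks that unfolding is_matrix_def
      by (intro arg_cong[where f = sum_list] map_cong) auto
    finally show ?thesis .
  qed
  have "ncols (hcat_rows r Ms) = length (hcat_rows r Ms ! 0)"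
    unfolding ncols_def using r by (simp add: hcat_rows_def hd_conv_nth)
  then show ncols: "ncols (hcat Ms) = sum_list (map ncols Ms)"
    unfolding H using row_length r by simp
  show "is_matrix r (hcat Ms)"
    unfolding is_matrix_def using ncols row_length r unfolding H by (auto simp: hcat_rows_def)
  have "cols (hcat Ms) = map (col (hcat_rows r Ms)) [0..<sum_list (map ncols Ms)]"
    unfolding cols_def[of "hcat Ms"] ncols unfolding H ..
  then show "cols (hcat Ms) = concat (map cols Ms)"
    using cols_hcat_rows[OF blocks] by simp
qed

lemma
  assumes "is_matrix r G"
  shows is_matrix_Cons_replicate: "is_matrix (Suc r) (replicate (ncols G) a # G)"
    and ncols_Cons_replicate: "ncols (replicate (ncols G) a # G) = ncols G"
    and cols_Cons_replicate: "cols (replicate (ncols G) a # G) = map ((#) a) (cols G)"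
proof -
  show ncols: "ncols (replicate (ncols G) a # G) = ncols G" by (simp add: ncols_def)
  show "is_matrix (Suc r) (replicate (ncols G) a # G)"
    using assms unfolding is_matrix_def ncols by auto
  show "cols (replicate (ncols G) a # G) = map ((#) a) (cols G)"
    unfolding cols_def col_def ncols by simp
qed

lemma cols_singleton: "cols [xs] = map (\<lambda>x. [x]) xs"
proof -
  have "cols [xs] = map (\<lambda>x. [x]) (map (nth xs) [0..<length xs])"
    unfolding cols_def col_def ncols_def by simp
  then show ?thesis by (simp only: map_nth)
qed

lemma concat_map_Cons_eq_product:
  "concat (map (\<lambda>x. map ((#) x) ys) xs) = map (\<lambda>(x, v). x # v) (List.product xs ys)"
  by (induction xs) auto

lemma distinct_concat_map_Cons:
  "distinct xs \<Longrightarrow> distinct ys \<Longrightarrow> distinct (concat (map (\<lambda>x. map ((#) x) ys) xs))"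
  unfolding concat_map_Cons_eq_product
  by (simp add: distinct_map distinct_product inj_on_def)

lemma set_concat_map_Cons:
  "set (concat (map (\<lambda>x. map ((#) x) ys) xs)) = (\<lambda>(x, v). x # v) ` (set xs \<times> set ys)"
  unfolding concat_map_Cons_eq_product by simp

section \<open>Linear codes given by the columns of a generator matrix\<close>

definition dot :: "'b::comm_ring_1 list \<Rightarrow> 'b list \<Rightarrow> 'b" where
  "dot c v = (\<Sum>i<length c. c ! i * v ! i)"

lemma dot_map_mult: "length v = length c \<Longrightarrow> dot c (map ((*) u) v) = u * dot c v"
  unfolding dot_def by (simp add: sum_distrib_left ac_simps)

lemma dot_map2_plus:
  "length x = length c \<Longrightarrow> length y = length c \<Longrightarrow> dot c (map2 (+) x y) = dot c x + dot c y"
  unfolding dot_def by (simp add: sum.distrib[symmetric] distrib_left)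

lemma dot_map2_minus:
  "length x = length c \<Longrightarrow> length y = length c \<Longrightarrow> dot c (map2 (-) x y) = dot c x - dot c y"
  unfolding dot_def by (simp add: sum_subtractf[symmetric] right_diff_distrib)

lemma dot_map2_minus_left:
  "length c' = length c \<Longrightarrow> dot (map2 (-) c c') v = dot c v - dot c' v"
  unfolding dot_def by (simp add: sum_subtractf[symmetric] left_diff_distrib)

lemma dot_replicate_0_left [simp]: "dot (replicate k 0) = (\<lambda>v. 0)"
  unfolding dot_def by (rule ext) simp

lemma dot_unit_vector: "i < length c \<Longrightarrow> dot c ((replicate (length c) 0)[i := 1]) = c ! i"
proof -
  assume i: "i < length c"
  have "dot c ((replicate (length c) 0)[i := 1]) = (\<Sum>j<length c. if j = i then c ! i else 0)"
    unfolding dot_def by (intro sum.cong refl) (auto simp: nth_list_update)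
  also have "\<dots> = c ! i" using i by simp
  finally show ?thesis .
qed

lemma nonzero_entry_if_dot_neq_0: "dot c v \<noteq> 0 \<Longrightarrow> \<exists>i<length c. c ! i \<noteq> 0"
  unfolding dot_def by (metis (no_types, lifting) lessThan_iff mult_zero_left sum.neutral)

lemma is_ideal_image_dot: "is_ideal (dot c ` {w. length w = length c})"
  unfolding is_ideal_def
proof (intro conjI ballI allI)
  have "replicate (length c) 0 \<in> {w. length w = length c}" by simp
  moreover have "dot c (replicate (length c) 0) = 0" unfolding dot_def by simp
  ultimately show "0 \<in> dot c ` {w. length w = length c}" by (metis imageI)
next
  fix a b assume "a \<in> dot c ` {w. length w = length c}" "b \<in> dot c ` {w. length w = length c}"
  then obtain x y where "length x = length c" "length y = length c" "a = dot c x" "b = dot c y"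
    by blast
  then have "a + b = dot c (map2 (+) x y)" "length (map2 (+) x y) = length c"
    by (simp_all add: dot_map2_plus)
  then show "a + b \<in> dot c ` {w. length w = length c}" by blast
next
  fix a r assume "a \<in> dot c ` {w. length w = length c}"
  then obtain x where "length x = length c" "a = dot c x" by blast
  then have "r * a = dot c (map ((*) r) x)" "length (map ((*) r) x) = length c"
    by (simp_all add: dot_map_mult)
  then show "r * a \<in> dot c ` {w. length w = length c}" by blast
qed

lemma card_eq_card_image_dot_mult_card_kernel:
  assumes fin: "finite A" and len: "\<And>w. w \<in> A \<Longrightarrow> length w = length c"
    and plus_closed: "\<And>x y. x \<in> A \<Longrightarrow> y \<in> A \<Longrightarrow> map2 (+) x y \<in> A"
    and minus_closed: "\<And>x y. x \<in> A \<Longrightarrow> y \<in> A \<Longrightarrow> map2 (-) x y \<in> A"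
  shows "card A = card (dot c ` A) * card {w\<in>A. dot c w = 0}"
proof (rule card_eq_card_image_mult_card_kernel[where p = "map2 (+)" and m = "map2 (-)"])
  fix x y assume x: "x \<in> A" and y: "y \<in> A"
  show "dot c (map2 (+) x y) = dot c x + dot c y" "dot c (map2 (-) x y) = dot c x - dot c y"
    using len[OF x] len[OF y] by (simp_all add: dot_map2_plus dot_map2_minus)
  show "map2 (+) (map2 (-) x y) y = x" "map2 (-) (map2 (+) x y) y = x"
    using len[OF x] len[OF y] by (simp_all add: list_eq_iff_nth_eq)
qed (use fin plus_closed minus_closed in auto)

lemma set_map2_subsetI:
  assumes "set x \<subseteq> A" "set y \<subseteq> A" "\<And>a b. a \<in> A \<Longrightarrow> b \<in> A \<Longrightarrow> h a b \<in> A"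
  shows "set (map2 h x y) \<subseteq> A"
proof
  fix z assume "z \<in> set (map2 h x y)"
  then obtain a b where "(a, b) \<in> set (zip x y)" "z = h a b" by auto
  then show "z \<in> A" using assms by (blast dest: set_zip_leftD set_zip_rightD)
qed

lemma finite_lists_length: "finite {w :: 'b::finite list. length w = k}"
  using finite_lists_length_eq[OF finite_UNIV, of k] by simp

lemma finite_lists_length_conj: "finite {w :: 'b::finite list. length w = k \<and> P w}"
  using finite_lists_length[of k] by (rule rev_finite_subset) auto

lemma card_lists_length: "card {w :: 'b::finite list. length w = k} = card (UNIV :: 'b set) ^ k"
  using card_lists_length_eq[OF finite_UNIV, of k] by simp

lemma lincomb_eq_map_dot_cols:
  assumes "is_matrix k G" "length c = k"
  shows "lincomb (ncols G) c G = map (dot c) (cols G)"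
  using assms unfolding is_matrix_def lincomb_def cols_def dot_def col_def by simp

lemma hamming_dist_map_dot:
  assumes "distinct CL"
  shows "hamming_dist (map (dot c) CL) (map (dot c') CL) = card {v\<in>set CL. dot c v \<noteq> dot c' v}"
proof -
  let ?I = "{i. i < length CL \<and> dot c (CL ! i) \<noteq> dot c' (CL ! i)}"
  have "hamming_dist (map (dot c) CL) (map (dot c') CL) = card ?I"
    unfolding hamming_dist_def by (intro arg_cong[where f = card] Collect_cong) auto
  also have "\<dots> = card ((!) CL ` ?I)"
    using assms by (intro card_image[symmetric] inj_onI) (auto simp: nth_eq_iff_index_eq)
  also have "(!) CL ` ?I = {v\<in>set CL. dot c v \<noteq> dot c' v}"
    by (auto simp: in_set_conv_nth)
  finally show ?thesis .
qed

lemma min_dist_eqI: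
  assumes "finite C" and lower: "\<And>x y. x \<in> C \<Longrightarrow> y \<in> C \<Longrightarrow> x \<noteq> y \<Longrightarrow> d \<le> hamming_dist x y"
    and "x \<in> C" "y \<in> C" "x \<noteq> y" "hamming_dist x y = d"
  shows "min_dist C = d"
  unfolding min_dist_def
proof (rule Min_eqI)
  have "{hamming_dist x y |x y. x \<in> C \<and> y \<in> C \<and> x \<noteq> y} \<subseteq> case_prod hamming_dist ` (C \<times> C)"
    by auto
  then show "finite {hamming_dist x y |x y. x \<in> C \<and> y \<in> C \<and> x \<noteq> y}"
    using assms(1) finite_subset by blast
qed (use assms in auto)

lemma code_rank_eqI:
  fixes C :: "'b::{comm_ring_1,finite} list set"
  assumes free: "free_submodule_rank n C k" and card_C: "card C = card (UNIV :: 'b set) ^ k"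
    and nontrivial: "card (UNIV :: 'b set) > 1"
  shows "code_rank n C = k"
  unfolding code_rank_def
proof (rule Least_equality)
  show "\<exists>C'. C \<subseteq> C' \<and> free_submodule_rank n C' k" using free by blast
next
  fix r assume "\<exists>C'. C \<subseteq> C' \<and> free_submodule_rank n C' r"
  then obtain C' vs where C': "C \<subseteq> C'" "length vs = r" "rspan n vs = C'"
    unfolding free_submodule_rank_def by blast
  then have C'_eq: "C' = (\<lambda>c. lincomb n c vs) ` {c. length c = r}"
    unfolding rspan_def by auto
  have "card C \<le> card C'"
    using C'(1) C'_eq finite_lists_length by (intro card_mono) auto
  also have "\<dots> \<le> card {c :: 'b list. length c = r}"
    unfolding C'_eq by (rule card_image_le[OF finite_lists_length])
  also have "\<dots> = card (UNIV :: 'b set) ^ r" by (rule card_lists_length)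
  finally have "card (UNIV :: 'b set) ^ k \<le> card (UNIV :: 'b set) ^ r" unfolding card_C .
  then show "k \<le> r" by (rule power_le_imp_le_exp[OF nontrivial])
qed

lemma ceiling_power_divide_power:
  assumes "b > 0" "i \<le> e"
  shows "\<lceil>real (b ^ e) / real b ^ i\<rceil> = int (b ^ (e - i))"
proof -
  have "b ^ e = b ^ (e - i) * b ^ i" using assms(2) by (simp flip: power_add)
  then have "real (b ^ e) / real b ^ i = real (b ^ (e - i))" using assms(1) by simp
  then show ?thesis by (metis ceiling_of_nat)
qed

text \<open>In the application \<open>X = |R\<^sup>k|\<close>, \<open>P = |M\<^sup>k|\<close>, \<open>ZA\<close> and \<open>ZB\<close> are the kernel sizes of a linear form on
  them, \<open>K\<close> is the size of its image on \<open>M\<^sup>k\<close>, \<open>m = |M|\<close> and \<open>wt\<close> is the weight to be bounded.\<close>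
lemma weight_bound_arith:
  fixes q m K X P ZA ZB W wt :: int
  assumes "q \<ge> 2" "m \<ge> 1" "K \<ge> 1" "q * P \<le> X"
    and "X = W * q * m" "X = q * K * ZA" "P = K * ZB"
    and "(q - 1) * m * wt = (X - ZA) - (P - ZB)"
  shows "W \<le> wt" and "K = 1 \<Longrightarrow> wt = W"
proof -
  have identity: "(wt - W) * ((q - 1) * m * q * K) = (K - 1) * (X - q * P)"
    using assms(5-8) by algebra
  have "(q - 1) * m * q * K > 0" using assms(1-3) by simp
  moreover have "(K - 1) * (X - q * P) \<ge> 0" using assms(3,4) by simp
  ultimately show "W \<le> wt" using identity by (metis zero_le_mult_iff diff_ge_0_iff_ge not_less)
  show "wt = W" if "K = 1"
    using identity \<open>(q - 1) * m * q * K > 0\<close> that assms(1,2) by auto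
qed

section \<open>Finite chain rings\<close>

locale finite_chain_ring =
  fixes g :: "'a::{comm_ring_1,finite}" and s :: nat and T :: "'a list"
  assumes maximal: "maximal_ideal (pideal g)" and nilpotent: "g ^ s = 0"
    and nonzero_powers: "\<forall>t<s. g ^ t \<noteq> 0" and reps: "coset_reps g T"
begin

abbreviation "M \<equiv> pideal g"
abbreviation "q \<equiv> length T"

lemma is_ideal_M: "is_ideal M"
  using maximal unfolding maximal_ideal_def by auto

lemma zero_in_M: "0 \<in> M"
  using is_ideal_M unfolding is_ideal_def by auto

lemma mult_in_M: "x \<in> M \<Longrightarrow> y * x \<in> M"
  using is_ideal_M unfolding is_ideal_def by auto

lemma add_in_M: "x \<in> M \<Longrightarrow> y \<in> M \<Longrightarrow> x + y \<in> M"
  using is_ideal_M unfolding is_ideal_def by auto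

lemma diff_in_M: "x \<in> M \<Longrightarrow> y \<in> M \<Longrightarrow> x - y \<in> M"
  using is_ideal_M by (rule is_ideal_diff)

lemma one_notin_M: "1 \<notin> M"
proof
  assume "1 \<in> M"
  then have "x \<in> M" for x using mult_in_M[of 1 x] by simp
  then show False using maximal unfolding maximal_ideal_def by auto
qed

lemma s_pos: "s \<ge> 1"
proof (rule ccontr)
  assume "\<not> s \<ge> 1"
  then have "s = 0" by simp
  then have "(1::'a) = 0" using nilpotent by simp
  then show False using one_notin_M zero_in_M by simp
qed

lemma g_mult_bottom: "g * g ^ (s - 1) = 0"
  using s_pos nilpotent by (metis Suc_diff_le diff_Suc_1 power_Suc)

lemma bottom_neq_0: "g ^ (s - 1) \<noteq> 0"
  using nonzero_powers s_pos by simp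

lemma unit_if_notin_M:
  assumes "x \<notin> M"
  shows "\<exists>y. x * y = 1"
proof -
  define J where "J = {r * x + m | r m. m \<in> M}"
  have "is_ideal J" unfolding is_ideal_def J_def
  proof (intro conjI ballI allI)
    show "0 \<in> {r * x + m |r m. m \<in> M}" using zero_in_M by (auto intro!: exI[of _ 0])
  next
    fix a b assume "a \<in> {r * x + m |r m. m \<in> M}" "b \<in> {r * x + m |r m. m \<in> M}"
    then obtain r1 m1 r2 m2 where "a = r1 * x + m1" "b = r2 * x + m2" "m1 \<in> M" "m2 \<in> M"
      by auto
    then have "a + b = (r1 + r2) * x + (m1 + m2)" "m1 + m2 \<in> M"
      by (simp_all add: algebra_simps add_in_M)
    then show "a + b \<in> {r * x + m |r m. m \<in> M}" by blast
  next
    fix a r assume "a \<in> {r * x + m |r m. m \<in> M}"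
    then obtain r1 m1 where "a = r1 * x + m1" "m1 \<in> M" by auto
    moreover from this have "r * m1 \<in> M" by (simp add: mult_in_M)
    ultimately have "r * a = (r * r1) * x + r * m1" "r * m1 \<in> M"
      by (simp_all add: algebra_simps)
    then show "r * a \<in> {r * x + m |r m. m \<in> M}" by blast
  qed
  moreover have "m \<in> J" if "m \<in> M" for m
    unfolding J_def using that by (intro CollectI exI[of _ 0] exI[of _ m]) simp
  moreover have "x \<in> J"
    unfolding J_def using zero_in_M by (intro CollectI exI[of _ 1] exI[of _ 0]) simp
  ultimately have "J = UNIV" using maximal assms unfolding maximal_ideal_def by (metis subsetI)
  then obtain r m where rm: "1 = r * x + m" "m \<in> M" unfolding J_def by blast
  then obtain t where "m = t * g" unfolding mem_pideal_iff by blast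
  then have "m ^ s = 0" using nilpotent by (simp add: power_mult_distrib)
  \<comment> \<open>so \<open>r * x = 1 - m\<close> is invertible, with a geometric series as inverse\<close>
  then have "(1 - m) * (\<Sum>i<s. m ^ i) = 1" by (metis one_diff_power_eq diff_zero)
  moreover have "1 - m = r * x" using rm by (simp add: algebra_simps)
  ultimately have "x * (r * (\<Sum>i<s. m ^ i)) = 1" by (simp add: algebra_simps)
  then show ?thesis by blast
qed

lemma unit_mult_eq_0_iff: "u \<notin> M \<Longrightarrow> u * x = 0 \<longleftrightarrow> x = 0"
  by (metis unit_if_notin_M mult.assoc mult.commute mult_1 mult_zero_right)

lemma eq_unit_mult_power: "x \<noteq> 0 \<Longrightarrow> \<exists>u t. u \<notin> M \<and> t < s \<and> x = u * g ^ t"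
proof -
  have "\<exists>u t'. u \<notin> M \<and> t' < s \<and> y * g ^ t = u * g ^ t'" if "y * g ^ t \<noteq> 0" for y t
    using that
  proof (induction "s - t" arbitrary: y t rule: less_induct)
    case less
    have "t < s"
    proof (rule ccontr)
      assume "\<not> t < s"
      then have "g ^ t = g ^ s * g ^ (t - s)" by (simp add: power_add[symmetric])
      then show False using less.prems nilpotent by simp
    qed
    show ?case
    proof (cases "y \<in> M")
      case True
      then obtain y' where "y = y' * g" unfolding mem_pideal_iff by blast
      then have "y * g ^ t = y' * g ^ Suc t" by (simp add: algebra_simps)
      then show ?thesis using less.hyps[of "Suc t" y'] \<open>t < s\<close> less.prems by auto
    qed (use \<open>t < s\<close> in blast)
  qed
  from this[of x 0] show "x \<noteq> 0 \<Longrightarrow> ?thesis" by simp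
qed

lemma mult_g_eq_0_iff: "g * y = 0 \<longleftrightarrow> y \<in> pideal (g ^ (s - 1))"
proof
  assume gy: "g * y = 0"
  show "y \<in> pideal (g ^ (s - 1))"
  proof (cases "y = 0")
    case True
    then show ?thesis unfolding mem_pideal_iff by (intro exI[of _ 0]) simp
  next
    case False
    obtain u t where ut: "u \<notin> M" "t < s" "y = u * g ^ t"
      using eq_unit_mult_power[OF False] by blast
    have "u * g ^ Suc t = 0" using gy ut by (simp add: algebra_simps)
    then have "g ^ Suc t = 0" using unit_mult_eq_0_iff ut by blast
    then have "\<not> Suc t < s" using nonzero_powers[rule_format, of "Suc t"] by auto
    then have "t = s - 1" using ut(2) by simp
    then show ?thesis using ut unfolding mem_pideal_iff by blast
  qed
next
  assume "y \<in> pideal (g ^ (s - 1))"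
  then obtain r where "y = r * g ^ (s - 1)" unfolding mem_pideal_iff by blast
  then have "g * y = r * (g * g ^ (s - 1))" by (simp add: ac_simps)
  then show "g * y = 0" using g_mult_bottom by simp
qed

lemma bottom_subset_ideal:
  assumes I: "is_ideal I" "I \<noteq> {0}"
  shows "pideal (g ^ (s - 1)) \<subseteq> I"
proof -
  obtain x where x: "x \<in> I" "x \<noteq> 0" using I unfolding is_ideal_def by auto
  obtain u t where ut: "u \<notin> M" "t < s" "x = u * g ^ t" using eq_unit_mult_power x by blast
  obtain v where v: "u * v = 1" using unit_if_notin_M ut by blast
  have "g ^ (s - 1) = g ^ (s - 1 - t) * g ^ t" using ut(2) by (simp add: power_add[symmetric])
  also have "\<dots> = (u * v) * (g ^ (s - 1 - t) * g ^ t)" using v by simp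
  also have "\<dots> = (v * g ^ (s - 1 - t)) * x" using ut(3) by (simp add: ac_simps)
  finally have "g ^ (s - 1) \<in> I" using I(1) x unfolding is_ideal_def by metis
  then show ?thesis using I(1) unfolding is_ideal_def by (auto simp: mem_pideal_iff)
qed

lemma q_ge_2: "q \<ge> 2"
proof -
  obtain i0 i1 where i: "i0 < q" "0 - T ! i0 \<in> M" "i1 < q" "1 - T ! i1 \<in> M"
    using reps unfolding coset_reps_def by meson
  have "i0 \<noteq> i1"
  proof
    assume "i0 = i1"
    then have "(1 - T ! i1) - (0 - T ! i0) \<in> M" using i diff_in_M by blast
    moreover have "(1 - T ! i1) - (0 - T ! i0) = 1" using \<open>i0 = i1\<close> by simp
    ultimately show False using one_notin_M by simp
  qed
  then show ?thesis using i by linarith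
qed

lemma card_UNIV_eq_q_mult_card_M: "card (UNIV :: 'a set) = q * card M"
proof -
  have "bij_betw (\<lambda>(i, m). T ! i + m) ({..<q} \<times> M) UNIV"
  proof (rule bij_betwI')
    fix a b assume ab: "a \<in> {..<q} \<times> M" "b \<in> {..<q} \<times> M"
    obtain i m j m' where ij: "a = (i, m)" "b = (j, m')" by (cases a, cases b) auto
    show "((case a of (i, m) \<Rightarrow> T ! i + m) = (case b of (i, m) \<Rightarrow> T ! i + m)) = (a = b)"
    proof
      assume e: "(case a of (i, m) \<Rightarrow> T ! i + m) = (case b of (i, m) \<Rightarrow> T ! i + m)"
      define x where "x = T ! i + m"
      have "x - T ! i = m" by (simp add: x_def)
      moreover have "x - T ! j = m'" using e ij by (simp add: x_def)
      ultimately have "x - T ! i \<in> M" "x - T ! j \<in> M" using ab ij by auto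
      moreover have "i < q" "j < q" using ab ij by auto
      ultimately have "i = j" using reps unfolding coset_reps_def by blast
      then show "a = b" using e ij by simp
    qed simp
  next
    fix x :: 'a
    obtain i where i: "i < q" "x - T ! i \<in> M" using reps unfolding coset_reps_def by blast
    then have "(i, x - T ! i) \<in> {..<q} \<times> M" "x = (case (i, x - T ! i) of (i, m) \<Rightarrow> T ! i + m)"
      by auto
    then show "\<exists>a\<in>{..<q} \<times> M. x = (case a of (i, m) \<Rightarrow> T ! i + m)" by blast
  qed simp
  then have "card (UNIV :: 'a set) = card ({..<q} \<times> M)" by (simp add: bij_betw_same_card)
  then show ?thesis by (simp add: card_cartesian_product)
qed

lemma card_bottom: "card (pideal (g ^ (s - 1))) = q"
proof -
  have "card (UNIV :: 'a set)
      = card (range (\<lambda>r. r * g ^ (s - 1))) * card {x\<in>UNIV. x * g ^ (s - 1) = 0}"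
    by (rule card_eq_card_image_mult_card_kernel[where p = "(+)" and m = "(-)"])
      (auto simp: algebra_simps)
  moreover have "{x\<in>UNIV. x * g ^ (s - 1) = 0} = M"
  proof (intro set_eqI iffI)
    fix x assume "x \<in> {x\<in>UNIV. x * g ^ (s - 1) = 0}"
    then show "x \<in> M" using unit_mult_eq_0_iff bottom_neq_0 by auto
  next
    fix x assume "x \<in> M"
    then obtain r where "x = r * g" unfolding mem_pideal_iff by blast
    then have "x * g ^ (s - 1) = r * (g * g ^ (s - 1))" by (simp add: ac_simps)
    then show "x \<in> {x\<in>UNIV. x * g ^ (s - 1) = 0}" using g_mult_bottom by simp
  qed
  moreover have "card M > 0" using zero_in_M by (auto simp: card_gt_0_iff)
  ultimately show ?thesis using card_UNIV_eq_q_mult_card_M unfolding pideal_def by simp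
qed

text \<open>The kernel of \<open>x \<mapsto> g x\<close> is \<open>(g\<^bsup>s-1\<^esup>)\<close>, which has \<open>q\<close> elements and lies in every nonzero ideal.\<close>
lemma card_ideal_eq_q_mult_card_image:
  assumes I: "is_ideal I" "I \<noteq> {0}"
  shows "card I = q * card ((\<lambda>x. g * x) ` I)"
proof -
  have "card I = card ((\<lambda>x. g * x) ` I) * card {x\<in>I. g * x = 0}"
    by (rule card_eq_card_image_mult_card_kernel[where p = "(+)" and m = "(-)"])
      (use I(1) is_ideal_diff in \<open>auto simp: algebra_simps is_ideal_def\<close>)
  moreover have "{x\<in>I. g * x = 0} = pideal (g ^ (s - 1))"
    using bottom_subset_ideal[OF I] mult_g_eq_0_iff by blast
  ultimately show ?thesis using card_bottom by simp
qed

lemma card_pideal_power: "t \<le> s \<Longrightarrow> card (pideal (g ^ (s - t))) = q ^ t"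
proof (induction t)
  case 0
  have "pideal (g ^ s) = {0}" using nilpotent unfolding pideal_def by auto
  then show ?case by simp
next
  case (Suc t)
  define I where "I = pideal (g ^ (s - Suc t))"
  have "g ^ (s - Suc t) \<in> I" "g ^ (s - Suc t) \<noteq> 0"
    using nonzero_powers Suc.prems unfolding I_def mem_pideal_iff by (auto intro: exI[of _ 1])
  then have "I \<noteq> {0}" by auto
  have s_t: "s - t = Suc (s - Suc t)" using Suc.prems by simp
  have "(\<lambda>x. g * x) ` I = pideal (g ^ (s - t))"
    unfolding I_def pideal_def s_t by (auto simp: ac_simps image_image)
  moreover have "card I = q * card ((\<lambda>x. g * x) ` I)"
    using is_ideal_pideal \<open>I \<noteq> {0}\<close> unfolding I_def by (rule card_ideal_eq_q_mult_card_image)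
  ultimately show ?case using Suc I_def by simp
qed

lemma card_UNIV: "card (UNIV :: 'a set) = q ^ s"
proof -
  have "pideal (1::'a) = UNIV" unfolding pideal_def by auto
  then show ?thesis using card_pideal_power[of s] by simp
qed

lemma card_M: "card M = q ^ (s - 1)"
  using card_pideal_power[of "s - 1"] s_pos by simp

lemma card_vectors: "card {v :: 'a list. length v = n} = q ^ (s * n)"
proof -
  have "card {v :: 'a list. length v = n} = card (UNIV :: 'a set) ^ n"
    by (rule card_lists_length)
  then show ?thesis by (simp add: card_UNIV power_mult)
qed

section \<open>The enumeration of the ring\<close>

lemma rho_Suc_add_mult_power:
  assumes "d < q" "j < q ^ m"
  shows "rho g (Suc m) T (j + d * q ^ m) = rho g m T j + T ! d * g ^ m"
proof -
  have "q > 0" using q_ge_2 by linarith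
  then have "rho g m T (j + d * q ^ m) = rho g m T j"
    unfolding rho_def using digit_add_mult_power by (intro sum.cong) auto
  moreover have "(j + d * q ^ m) div q ^ m = d"
    using assms(2) \<open>q > 0\<close> by simp
  ultimately show ?thesis using assms(1) unfolding rho_def by simp
qed

lemma rho_approximates: "\<exists>j<q ^ m. \<exists>y. x = rho g m T j + g ^ m * y"
proof (induction m)
  case 0
  have "x = rho g 0 T 0 + g ^ 0 * x" unfolding rho_def by simp
  then show ?case by force
next
  case (Suc m)
  then obtain j y where jy: "j < q ^ m" "x = rho g m T j + g ^ m * y" by auto
  obtain d where d: "d < q" "y - T ! d \<in> M" using reps unfolding coset_reps_def by blast
  obtain y' where y': "y - T ! d = y' * g" using d unfolding mem_pideal_iff by blast
  have "j + d * q ^ m < q ^ Suc m"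
  proof -
    have "j + d * q ^ m < q ^ m + d * q ^ m" using jy(1) by simp
    also have "\<dots> = Suc d * q ^ m" by simp
    also have "\<dots> \<le> q * q ^ m" using d(1) by (intro mult_le_mono1) simp
    finally show ?thesis by simp
  qed
  moreover have "x = rho g (Suc m) T (j + d * q ^ m) + g ^ Suc m * y'"
  proof -
    have "y = T ! d + y' * g" using y' by (simp add: algebra_simps)
    then have "x = rho g m T j + T ! d * g ^ m + g ^ Suc m * y'"
      using jy by (simp add: algebra_simps)
    then show ?thesis using rho_Suc_add_mult_power[OF d(1) jy(1)] by simp
  qed
  ultimately show ?case by blast
qed

lemma range_rho: "rho g s T ` {..<q ^ s} = UNIV"
  using rho_approximates[of s] nilpotent by fastforce

lemma inj_on_rho: "inj_on (rho g s T) {..<q ^ s}"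
  by (rule eq_card_imp_inj_on) (simp_all add: range_rho card_UNIV)

definition element_list :: "'a list" where
  "element_list = map (rho g s T) [0..<q ^ s]"

lemma distinct_element_list: "distinct element_list"
  using inj_on_rho by (simp add: element_list_def distinct_map lessThan_atLeast0)

lemma set_element_list: "set element_list = UNIV"
  using range_rho by (simp add: element_list_def lessThan_atLeast0)

lemma distinct_gamma_list: "distinct (gamma_list g s T)"
  using distinct_element_list unfolding gamma_list_def element_list_def by simp

lemma set_gamma_list: "set (gamma_list g s T) = M"
  using set_element_list unfolding gamma_list_def element_list_def by simp

lemma length_gamma_list: "length (gamma_list g s T) = q ^ (s - 1)"
  using distinct_card[OF distinct_gamma_list] set_gamma_list card_M by simp

lemma Galpha_one: "Galpha g s T (Suc 0) = [element_list]"
  unfolding element_list_def by simp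

lemma Galpha_Suc_Suc:
  "Galpha g s T (Suc (Suc k)) =
     hcat (map (\<lambda>x. replicate (q ^ (s * Suc k)) x # Galpha g s T (Suc k)) element_list)"
  unfolding element_list_def by (simp only: Galpha.simps map_map comp_def)

section \<open>Columns of the generator matrices\<close>

lemma Galpha_columns:
  "is_matrix (Suc k) (Galpha g s T (Suc k)) \<and> distinct (cols (Galpha g s T (Suc k)))
   \<and> set (cols (Galpha g s T (Suc k))) = {v. length v = Suc k}"
proof (induction k)
  case 0
  have "is_matrix (Suc 0) [element_list]" unfolding is_matrix_def ncols_def by simp
  moreover have "distinct (map (\<lambda>x. [x]) element_list)"
    using distinct_element_list by (simp add: distinct_map inj_on_def)
  moreover have "set (map (\<lambda>x. [x]) element_list) = {v. length v = Suc 0}"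
    using set_element_list by (auto simp: length_Suc_conv)
  ultimately show ?case unfolding Galpha_one cols_singleton by simp
next
  case (Suc k)
  define G where "G = Galpha g s T (Suc k)"
  have G: "is_matrix (Suc k) G" "distinct (cols G)" "set (cols G) = {v. length v = Suc k}"
    using Suc unfolding G_def by auto
  have ncols_G: "ncols G = q ^ (s * Suc k)"
    using distinct_card[OF G(2)] G(3) card_vectors[of "Suc k"] by simp
  define Ms where "Ms = map (\<lambda>x. replicate (ncols G) x # G) element_list"
  have eq: "Galpha g s T (Suc (Suc k)) = hcat Ms"
    unfolding Ms_def ncols_G unfolding G_def Galpha_Suc_Suc ..
  have ne: "Ms \<noteq> []" unfolding Ms_def using set_element_list by auto
  have blocks: "\<forall>M\<in>set Ms. is_matrix (Suc (Suc k)) M"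
    unfolding Ms_def using is_matrix_Cons_replicate[OF G(1)] by auto
  have cols: "cols (hcat Ms) = concat (map (\<lambda>x. map ((#) x) (cols G)) element_list)"
    using cols_hcat[OF ne blocks] unfolding Ms_def by (simp add: comp_def cols_Cons_replicate[OF G(1)])
  have "set (concat (map (\<lambda>x. map ((#) x) (cols G)) element_list)) = {v. length v = Suc (Suc k)}"
    unfolding set_concat_map_Cons G(3) set_element_list by (auto simp: length_Suc_conv)
  then show ?case
    using is_matrix_hcat[OF ne blocks] cols eq distinct_concat_map_Cons[OF distinct_element_list G(2)]
    by simp
qed

lemma ncols_Galpha: "ncols (Galpha g s T (Suc k)) = q ^ (s * Suc k)"
  using Galpha_columns[of k] distinct_card card_vectors[of "Suc k"] by (metis length_cols)

text \<open>Vectors whose first coordinate outside \<open>M\<close> is \<open>1\<close>: one representative for each orbit of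
  the units of \<open>R\<close> acting on \<open>R\<^sup>k - M\<^sup>k\<close>.\<close>
definition normed_vecs :: "nat \<Rightarrow> 'a list set" where
  "normed_vecs k = {v. length v = k \<and> (\<exists>j<k. v ! j = 1 \<and> (\<forall>i<j. v ! i \<in> M))}"

lemma normed_vecs_one: "normed_vecs (Suc 0) = {[1]}"
  unfolding normed_vecs_def by (auto simp: length_Suc_conv)

lemma normed_vecs_Suc:
  "normed_vecs (Suc k) = (\<lambda>v. 1 # v) ` {v. length v = k} \<union> (\<lambda>(a, v). a # v) ` (M \<times> normed_vecs k)"
proof (intro set_eqI iffI)
  fix v assume "v \<in> normed_vecs (Suc k)"
  then obtain a w j where v: "v = a # w" "length w = k" "j < Suc k" "v ! j = 1" "\<forall>i<j. v ! i \<in> M"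
    unfolding normed_vecs_def by (auto simp: length_Suc_conv)
  show "v \<in> (\<lambda>v. 1 # v) ` {v. length v = k} \<union> (\<lambda>(a, v). a # v) ` (M \<times> normed_vecs k)"
  proof (cases j)
    case 0
    then show ?thesis using v by auto
  next
    case (Suc j')
    have "a \<in> M" using v Suc by force
    moreover have "w \<in> normed_vecs k"
      unfolding normed_vecs_def using v Suc by (intro CollectI conjI exI[of _ j']) force+
    ultimately show ?thesis using v by blast
  qed
next
  fix v assume "v \<in> (\<lambda>v. 1 # v) ` {v. length v = k} \<union> (\<lambda>(a, v). a # v) ` (M \<times> normed_vecs k)"
  then show "v \<in> normed_vecs (Suc k)"
  proof
    assume "v \<in> (\<lambda>v. 1 # v) ` {v. length v = k}"
    then show ?thesis unfolding normed_vecs_def by (auto intro!: exI[of _ 0])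
  next
    assume "v \<in> (\<lambda>(a, v). a # v) ` (M \<times> normed_vecs k)"
    then obtain a w j where w: "v = a # w" "a \<in> M" "length w = k" "j < k" "w ! j = 1"
      "\<forall>i<j. w ! i \<in> M"
      unfolding normed_vecs_def by auto
    have "\<forall>i<Suc j. v ! i \<in> M"
      using w by (auto simp: less_Suc_eq_0_disj)
    then show ?thesis unfolding normed_vecs_def using w by (intro CollectI conjI exI[of _ "Suc j"]) auto
  qed
qed

lemma unit_vector_in_normed_vecs: "i < k \<Longrightarrow> (replicate k 0)[i := 1] \<in> normed_vecs k"
  unfolding normed_vecs_def using zero_in_M
  by (intro CollectI conjI exI[of _ i]) (auto simp: nth_list_update)

lemma Gbeta_columns:
  "is_matrix (Suc k) (Gbeta g s T (Suc k)) \<and> distinct (cols (Gbeta g s T (Suc k)))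
   \<and> set (cols (Gbeta g s T (Suc k))) = normed_vecs (Suc k)"
proof (induction k)
  case 0
  have "cols [[1::'a]] = [[1]]" unfolding cols_def col_def ncols_def by simp
  moreover have "is_matrix (Suc 0) [[1::'a]]" unfolding is_matrix_def ncols_def by simp
  ultimately show ?case using normed_vecs_one by simp
next
  case (Suc k)
  define G where "G = Gbeta g s T (Suc k)"
  define A where "A = Galpha g s T (Suc k)"
  have G: "is_matrix (Suc k) G" "distinct (cols G)" "set (cols G) = normed_vecs (Suc k)"
    using Suc unfolding G_def by auto
  have A: "is_matrix (Suc k) A" "distinct (cols A)" "set (cols A) = {v. length v = Suc k}"
    using Galpha_columns[of k] unfolding A_def by auto
  define Ms where
    "Ms = (replicate (ncols A) 1 # A) # map (\<lambda>x. replicate (ncols G) x # G) (gamma_list g s T)"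
  have eq: "Gbeta g s T (Suc (Suc k)) = hcat Ms"
    unfolding Ms_def G_def A_def by (simp add: ncols_Galpha)
  have ne: "Ms \<noteq> []" unfolding Ms_def by simp
  have blocks: "\<forall>M\<in>set Ms. is_matrix (Suc (Suc k)) M"
    unfolding Ms_def using is_matrix_Cons_replicate[OF G(1)] is_matrix_Cons_replicate[OF A(1)] by auto
  define left where "left = map ((#) 1) (cols A)"
  define right where "right = concat (map (\<lambda>x. map ((#) x) (cols G)) (gamma_list g s T))"
  have cols: "cols (hcat Ms) = left @ right"
    using cols_hcat[OF ne blocks] unfolding Ms_def left_def right_def
    by (simp add: comp_def cols_Cons_replicate[OF G(1)] cols_Cons_replicate[OF A(1)])
  have set_left: "set left = (\<lambda>v. 1 # v) ` {v. length v = Suc k}"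
    unfolding left_def using A(3) by simp
  have set_right: "set right = (\<lambda>(a, v). a # v) ` (M \<times> normed_vecs (Suc k))"
    unfolding right_def set_concat_map_Cons G(3) set_gamma_list ..
  have "distinct left" unfolding left_def using A(2) by (simp add: distinct_map)
  moreover have "distinct right"
    unfolding right_def by (rule distinct_concat_map_Cons[OF distinct_gamma_list G(2)])
  moreover have "set left \<inter> set right = {}"
    unfolding set_left set_right using one_notin_M by auto
  ultimately show ?case
    using is_matrix_hcat[OF ne blocks] cols eq set_left set_right normed_vecs_Suc[of "Suc k"] by simp
qed

lemma ncols_Gbeta_Suc_Suc:
  "ncols (Gbeta g s T (Suc (Suc k))) = q ^ (s * Suc k) + q ^ (s - 1) * ncols (Gbeta g s T (Suc k))"
proof -
  define G where "G = Gbeta g s T (Suc k)"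
  define A where "A = Galpha g s T (Suc k)"
  have G: "is_matrix (Suc k) G" using Gbeta_columns[of k] unfolding G_def by auto
  have A: "is_matrix (Suc k) A" using Galpha_columns[of k] unfolding A_def by auto
  define Ms where
    "Ms = (replicate (ncols A) 1 # A) # map (\<lambda>x. replicate (ncols G) x # G) (gamma_list g s T)"
  have eq: "Gbeta g s T (Suc (Suc k)) = hcat Ms"
    unfolding Ms_def G_def A_def by (simp add: ncols_Galpha)
  have ne: "Ms \<noteq> []" unfolding Ms_def by simp
  have blocks: "\<forall>M\<in>set Ms. is_matrix (Suc (Suc k)) M"
    unfolding Ms_def using is_matrix_Cons_replicate[OF G] is_matrix_Cons_replicate[OF A] by auto
  have "ncols (hcat Ms) = ncols A + length (gamma_list g s T) * ncols G"
    using ncols_hcat[OF ne blocks] unfolding Ms_def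
    by (simp add: comp_def ncols_Cons_replicate[OF G] ncols_Cons_replicate[OF A] sum_list_triv)
  then show ?thesis using eq length_gamma_list unfolding A_def G_def by (simp add: ncols_Galpha)
qed

lemma ncols_Gbeta: "ncols (Gbeta g s T (Suc k)) = (\<Sum>i<Suc k. q ^ (s * k - i))"
proof (induction k)
  case 0
  then show ?case by (simp add: ncols_def)
next
  case (Suc k)
  have "(\<Sum>i<Suc (Suc k). q ^ (s * Suc k - i)) = q ^ (s * Suc k) + (\<Sum>i<Suc k. q ^ (s * Suc k - Suc i))"
    by (subst sum.lessThan_Suc_shift) simp
  also have "(\<Sum>i<Suc k. q ^ (s * Suc k - Suc i)) = (\<Sum>i<Suc k. q ^ (s - 1) * q ^ (s * k - i))"
  proof (intro sum.cong refl)
    fix i assume "i \<in> {..<Suc k}"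
    then have "i \<le> k" by simp
    moreover have "k \<le> s * k" using s_pos by simp
    ultimately have "i \<le> s * k" by linarith
    moreover have "s * Suc k = s * k + s" by simp
    ultimately have "s * k - i + (s - 1) = s * Suc k - Suc i" using s_pos by linarith
    then show "q ^ (s * Suc k - Suc i) = q ^ (s - 1) * q ^ (s * k - i)"
      by (metis power_add mult.commute)
  qed
  also have "\<dots> = q ^ (s - 1) * ncols (Gbeta g s T (Suc k))"
    by (simp only: Suc.IH sum_distrib_left)
  finally show ?case using ncols_Gbeta_Suc_Suc by simp
qed

section \<open>Weights of codewords\<close>

lemma card_M_vectors: "card {w. length w = k \<and> set w \<subseteq> M} = q ^ ((s - 1) * k)"
  using card_lists_length_eq[of M k] card_M by (simp add: conj_commute power_mult)

lemma M_vectors_eq_image: "{w. length w = k \<and> set w \<subseteq> M} = map ((*) g) ` {w. length w = k}"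
proof (intro set_eqI iffI)
  fix w assume "w \<in> {w. length w = k \<and> set w \<subseteq> M}"
  then have "length w = k" "\<exists>w'. w = map ((*) g) w'"
    unfolding ex_map_conv by (auto simp: mem_pideal_iff mult.commute)
  then show "w \<in> map ((*) g) ` {w. length w = k}" by auto
qed (auto simp: mem_pideal_iff mult.commute)

lemma image_dot_M_vectors:
  assumes "length c = k"
  shows "dot c ` {w. length w = k \<and> set w \<subseteq> M} = (\<lambda>x. g * x) ` dot c ` {w. length w = k}"
  unfolding M_vectors_eq_image image_image using assms by (intro image_cong) (simp_all add: dot_map_mult)

lemma inj_on_scale_normed_vecs: "inj_on (\<lambda>(u, v). map ((*) u) v) ((UNIV - M) \<times> normed_vecs k)"
proof (rule inj_onI)
  fix x y assume x: "x \<in> (UNIV - M) \<times> normed_vecs k" and y: "y \<in> (UNIV - M) \<times> normed_vecs k"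
    and e: "(\<lambda>(u, v). map ((*) u) v) x = (\<lambda>(u, v). map ((*) u) v) y"
  obtain u v u' v' where uv: "x = (u, v)" "y = (u', v')" by (cases x, cases y) auto
  have u: "u \<notin> M" "u' \<notin> M" using x y uv by auto
  obtain j where j: "length v = k" "j < k" "v ! j = 1" "\<forall>i<j. v ! i \<in> M"
    using x uv unfolding normed_vecs_def by auto
  obtain j' where j': "length v' = k" "j' < k" "v' ! j' = 1" "\<forall>i<j'. v' ! i \<in> M"
    using y uv unfolding normed_vecs_def by auto
  have ev: "u * v ! i = u' * v' ! i" if "i < k" for i
    using arg_cong[OF e, of "\<lambda>l. l ! i"] that j j' uv by simp
  \<comment> \<open>a unit multiple of an entry lies in \<open>M\<close> iff the entry does, so both leading 1s sit at the same place\<close>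
  have "j = j'"
  proof (rule ccontr)
    assume "j \<noteq> j'"
    then consider "j < j'" | "j' < j" by linarith
    then show False
    proof cases
      case 1
      then have "u' * v' ! j \<in> M" using j' mult_in_M by blast
      then show False using ev[of j] j u by simp
    next
      case 2
      then have "u * v ! j' \<in> M" using j mult_in_M by blast
      then show False using ev[of j'] j' u by simp
    qed
  qed
  then have "u = u'" using ev[of j] j j' by simp
  moreover have "v = v'"
  proof (rule nth_equalityI)
    show "length v = length v'" using j j' by simp
    fix i assume "i < length v"
    then have "u * (v ! i - v' ! i) = 0" using ev[of i] \<open>u = u'\<close> j by (simp add: right_diff_distrib)
    then show "v ! i = v' ! i" using unit_mult_eq_0_iff u(1) by simp
  qed
  ultimately show "x = y" using uv by simp
qed

lemma image_scale_normed_vecs: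
  "(\<lambda>(u, v). map ((*) u) v) ` ((UNIV - M) \<times> normed_vecs k) = {w. length w = k \<and> \<not> set w \<subseteq> M}"
proof (intro set_eqI iffI)
  fix w assume "w \<in> (\<lambda>(u, v). map ((*) u) v) ` ((UNIV - M) \<times> normed_vecs k)"
  then obtain u v where uv: "u \<notin> M" "v \<in> normed_vecs k" "w = map ((*) u) v" by auto
  obtain j where j: "length v = k" "j < k" "v ! j = 1" using uv(2) unfolding normed_vecs_def by auto
  have "w ! j \<notin> M" using uv j by simp
  moreover have "w ! j \<in> set w" using uv(3) j(1,2) by (simp only: nth_mem length_map)
  ultimately show "w \<in> {w. length w = k \<and> \<not> set w \<subseteq> M}" using uv(3) j(1) by auto
next
  fix w assume "w \<in> {w. length w = k \<and> \<not> set w \<subseteq> M}"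
  then have w: "length w = k" "\<exists>i<k. w ! i \<notin> M" by (auto simp: in_set_conv_nth)
  define j where "j = (LEAST i. i < k \<and> w ! i \<notin> M)"
  have j: "j < k" "w ! j \<notin> M" using LeastI_ex[OF w(2)] unfolding j_def by auto
  have before_j: "w ! i \<in> M" if "i < j" for i
    using not_less_Least[of i "\<lambda>i. i < k \<and> w ! i \<notin> M"] that j unfolding j_def by auto
  obtain u where u: "w ! j * u = 1" using unit_if_notin_M j by blast
  define v where "v = map ((*) u) w"
  have "v \<in> normed_vecs k" unfolding normed_vecs_def v_def
  proof (intro CollectI conjI exI[of _ j])
    show "length (map ((*) u) w) = k" "j < k" using w j by auto
    show "map ((*) u) w ! j = 1" using u j w by (simp add: mult.commute)
    show "\<forall>i<j. map ((*) u) w ! i \<in> M" using before_j mult_in_M j w by auto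
  qed
  moreover have "w = map ((*) (w ! j)) v" unfolding v_def
    using u by (simp add: list_eq_iff_nth_eq mult.assoc[symmetric])
  ultimately show "w \<in> (\<lambda>(u, v). map ((*) u) v) ` ((UNIV - M) \<times> normed_vecs k)"
    using j by (auto intro!: image_eqI[of _ _ "(w ! j, v)"])
qed

lemma card_units_mult_weight:
  assumes c: "length c = k"
  shows "card (UNIV - M) * card {v\<in>normed_vecs k. dot c v \<noteq> 0}
       = card {w. length w = k \<and> \<not> set w \<subseteq> M \<and> dot c w \<noteq> 0}"
proof -
  define F where "F = (\<lambda>(u, v). map ((*) u) (v :: 'a list))"
  define D where "D = (UNIV - M) \<times> {v\<in>normed_vecs k. dot c v \<noteq> 0}"
  have dot_F: "dot c (F (u, v)) \<noteq> 0 \<longleftrightarrow> dot c v \<noteq> 0" if "u \<notin> M" "v \<in> normed_vecs k" for u v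
    using that c dot_map_mult[of v c u] unit_mult_eq_0_iff unfolding F_def normed_vecs_def by auto
  have "inj_on F D"
    using inj_on_scale_normed_vecs[of k] unfolding F_def D_def by (rule inj_on_subset) auto
  then have "card D = card (F ` D)" by (simp add: card_image)
  also have "F ` D = {w \<in> F ` ((UNIV - M) \<times> normed_vecs k). dot c w \<noteq> 0}"
    unfolding D_def using dot_F by auto
  also have "\<dots> = {w. length w = k \<and> \<not> set w \<subseteq> M \<and> dot c w \<noteq> 0}"
    unfolding F_def image_scale_normed_vecs by auto
  finally show ?thesis unfolding D_def by (simp add: card_cartesian_product)
qed

lemma card_image_dot_eq_q_mult:
  assumes c: "length c = k" and nonzero: "\<exists>i<k. c ! i \<noteq> 0"
  shows "card (dot c ` {w. length w = k}) = q * card (dot c ` {w. length w = k \<and> set w \<subseteq> M})"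
proof -
  have "is_ideal (dot c ` {w. length w = k})" using is_ideal_image_dot[of c] c by simp
  moreover have "dot c ` {w. length w = k} \<noteq> {0}"
  proof
    assume image: "dot c ` {w. length w = k} = {0}"
    obtain i where i: "i < k" "c ! i \<noteq> 0" using nonzero by blast
    have "dot c ((replicate k 0)[i := 1]) = c ! i" using dot_unit_vector[of i c] i c by simp
    moreover have "dot c ((replicate k 0)[i := 1]) \<in> dot c ` {w. length w = k}" by simp
    ultimately show False using image i by simp
  qed
  ultimately show ?thesis
    unfolding image_dot_M_vectors[OF c] by (rule card_ideal_eq_q_mult_card_image)
qed

lemma card_fibres_dot:
  assumes c: "length c = k" and nonzero: "\<exists>i<k. c ! i \<noteq> 0"
  obtains K where "K \<ge> 1"
    and "card {w :: 'a list. length w = k} = q * K * card {w. length w = k \<and> dot c w = 0}"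
    and "card {w. length w = k \<and> set w \<subseteq> M} = K * card {w. length w = k \<and> set w \<subseteq> M \<and> dot c w = 0}"
    and "dot c ` {w. length w = k \<and> set w \<subseteq> M} = {0} \<Longrightarrow> K = 1"
proof -
  define A where "A = {w :: 'a list. length w = k}"
  define B where "B = {w. length w = k \<and> set w \<subseteq> M}"
  have fin: "finite A" "finite B"
    unfolding A_def B_def by (simp_all add: finite_lists_length finite_lists_length_conj)
  have "card A = card (dot c ` A) * card {w\<in>A. dot c w = 0}"
    by (rule card_eq_card_image_dot_mult_card_kernel) (use fin c in \<open>auto simp: A_def\<close>)
  then have A: "card A = q * card (dot c ` B) * card {w. length w = k \<and> dot c w = 0}"
    using card_image_dot_eq_q_mult[OF c nonzero] unfolding A_def B_def by simp
  have "card B = card (dot c ` B) * card {w\<in>B. dot c w = 0}"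
  proof (rule card_eq_card_image_dot_mult_card_kernel)
    fix x y assume xy: "x \<in> B" "y \<in> B"
    have "set (map2 (+) x y) \<subseteq> M" "set (map2 (-) x y) \<subseteq> M"
      by (rule set_map2_subsetI; use xy in \<open>simp add: B_def add_in_M diff_in_M\<close>)+
    then show "map2 (+) x y \<in> B" "map2 (-) x y \<in> B" using xy unfolding B_def by auto
  qed (use fin c in \<open>auto simp: B_def\<close>)
  then have B: "card B = card (dot c ` B) * card {w. length w = k \<and> set w \<subseteq> M \<and> dot c w = 0}"
    unfolding B_def by (simp add: conj_assoc)
  have "replicate k 0 \<in> B" unfolding B_def using zero_in_M by auto
  then have "card (dot c ` B) \<ge> 1" using fin by (auto simp: Suc_le_eq card_gt_0_iff)
  then show ?thesis
    by (rule that[of "card (dot c ` B)"]) (use A B in \<open>simp_all add: A_def B_def\<close>)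
qed

lemma units_mult_weight_eq_diff:
  assumes c: "length c = k"
  shows "(int q - 1) * int (q ^ (s - 1)) * int (card {v\<in>normed_vecs k. dot c v \<noteq> 0})
       = int (card {w. length w = k \<and> dot c w \<noteq> 0})
         - int (card {w. length w = k \<and> set w \<subseteq> M \<and> dot c w \<noteq> 0})"
proof -
  define wt where "wt = card {v\<in>normed_vecs k. dot c v \<noteq> 0}"
  define outside where "outside = card {w. length w = k \<and> \<not> set w \<subseteq> M \<and> dot c w \<noteq> 0}"
  have "card {w. length w = k \<and> set w \<subseteq> M \<and> dot c w \<noteq> 0} + outside
      = card {w. length w = k \<and> dot c w \<noteq> 0}"
    using card_filter_add_card_filter_not[of "{w. length w = k \<and> dot c w \<noteq> 0}" "\<lambda>w. set w \<subseteq> M"]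
    unfolding outside_def by (simp add: finite_lists_length_conj conj_commute conj_left_commute)
  then have "int outside = int (card {w. length w = k \<and> dot c w \<noteq> 0})
      - int (card {w. length w = k \<and> set w \<subseteq> M \<and> dot c w \<noteq> 0})"
    by linarith
  moreover have "card (UNIV - M) + card M = card (UNIV :: 'a set)"
    using card_Diff_subset[of M UNIV] card_mono[of UNIV M] by simp
  then have "card (UNIV - M) + q ^ (s - 1) = q * q ^ (s - 1)"
    using card_UNIV_eq_q_mult_card_M card_M by simp
  then have "int (card (UNIV - M)) + int (q ^ (s - 1)) = int q * int (q ^ (s - 1))"
    by (simp only: of_nat_add[symmetric] of_nat_mult[symmetric] of_nat_eq_iff)
  then have "int (card (UNIV - M)) = (int q - 1) * int (q ^ (s - 1))"
    by (simp add: algebra_simps)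
  moreover have "int (card (UNIV - M)) * int wt = int outside"
    using card_units_mult_weight[OF c] unfolding wt_def outside_def
    by (simp only: of_nat_mult[symmetric] of_nat_eq_iff)
  ultimately show ?thesis unfolding wt_def by simp
qed

lemma power_eq_split: "k \<ge> 1 \<Longrightarrow> q ^ (s * k) = q ^ (s * (k - 1)) * q * q ^ (s - 1)"
proof -
  assume "k \<ge> 1"
  then have "s * k = s * (k - 1) + 1 + (s - 1)" using s_pos by (simp add: algebra_simps)
  then show ?thesis by (simp add: power_add)
qed

lemma q_mult_power_le: "k \<ge> 1 \<Longrightarrow> q * q ^ ((s - 1) * k) \<le> q ^ (s * k)"
proof -
  assume "k \<ge> 1"
  then have "Suc ((s - 1) * k) \<le> s * k" using s_pos by (cases s) auto
  then have "q ^ Suc ((s - 1) * k) \<le> q ^ (s * k)" using q_ge_2 by (intro power_increasing) simp_all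
  then show ?thesis by simp
qed

lemma card_normed_vecs_dot_neq_0:
  assumes c: "length c = k" and nonzero: "\<exists>i<k. c ! i \<noteq> 0"
  shows "q ^ (s * (k - 1)) \<le> card {v\<in>normed_vecs k. dot c v \<noteq> 0}"
    and "dot c ` {w. length w = k \<and> set w \<subseteq> M} = {0} \<Longrightarrow>
      card {v\<in>normed_vecs k. dot c v \<noteq> 0} = q ^ (s * (k - 1))"
proof -
  obtain K where K: "K \<ge> 1"
    "card {w :: 'a list. length w = k} = q * K * card {w. length w = k \<and> dot c w = 0}"
    "card {w. length w = k \<and> set w \<subseteq> M} = K * card {w. length w = k \<and> set w \<subseteq> M \<and> dot c w = 0}"
    "dot c ` {w. length w = k \<and> set w \<subseteq> M} = {0} \<Longrightarrow> K = 1"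
    using card_fibres_dot[OF c nonzero] by blast
  have k: "k \<ge> 1" using nonzero by auto
  have split: "card {w :: 'a list. length w = k \<and> P w} + card {w. length w = k \<and> \<not> P w} = q ^ (s * k)"
    "card {w. length w = k \<and> set w \<subseteq> M \<and> P w} + card {w. length w = k \<and> set w \<subseteq> M \<and> \<not> P w}
     = q ^ ((s - 1) * k)" for P
    using card_filter_add_card_filter_not[OF finite_lists_length, of k P]
      card_filter_add_card_filter_not[OF finite_lists_length_conj, of k "\<lambda>w. set w \<subseteq> M" P]
      card_vectors[of k] card_M_vectors[of k]
    by (simp_all add: conj_assoc)
  have facts: "int q \<ge> 2" "int (q ^ (s - 1)) \<ge> 1" "int K \<ge> 1"
    "int q * int (q ^ ((s - 1) * k)) \<le> int (q ^ (s * k))"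
    "int (q ^ (s * k)) = int (q ^ (s * (k - 1))) * int q * int (q ^ (s - 1))"
    "int (q ^ (s * k)) = int q * int K * int (card {w. length w = k \<and> dot c w = 0})"
    "int (q ^ ((s - 1) * k)) = int K * int (card {w. length w = k \<and> set w \<subseteq> M \<and> dot c w = 0})"
    using q_ge_2 K(1) q_mult_power_le[OF k] power_eq_split[OF k] K(2,3) card_vectors[of k]
      card_M_vectors[of k]
    by (simp_all only: of_nat_mult[symmetric] of_nat_le_iff of_nat_eq_iff) simp_all
  have "(int q - 1) * int (q ^ (s - 1)) * int (card {v\<in>normed_vecs k. dot c v \<noteq> 0})
      = (int (q ^ (s * k)) - int (card {w. length w = k \<and> dot c w = 0}))
        - (int (q ^ ((s - 1) * k)) - int (card {w. length w = k \<and> set w \<subseteq> M \<and> dot c w = 0}))"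
    using units_mult_weight_eq_diff[OF c] split[of "\<lambda>w. dot c w = 0"] by linarith
  note bound = weight_bound_arith[OF facts this]
  show "q ^ (s * (k - 1)) \<le> card {v\<in>normed_vecs k. dot c v \<noteq> 0}"
    using bound(1) by simp
  show "card {v\<in>normed_vecs k. dot c v \<noteq> 0} = q ^ (s * (k - 1))"
    if "dot c ` {w. length w = k \<and> set w \<subseteq> M} = {0}"
    using bound(2) K(4)[OF that] by simp
qed

lemma dot_bottom_M_vectors: "dot (g ^ (s - 1) # replicate k 0) ` {w. length w = Suc k \<and> set w \<subseteq> M} = {0}"
proof -
  have "dot (g ^ (s - 1) # replicate k 0) w = 0" if w: "length w = Suc k" "set w \<subseteq> M" for w
  proof -
    have "w ! 0 \<in> M" using w by (simp add: subset_code(1))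
    then obtain r where r: "w ! 0 = r * g" unfolding mem_pideal_iff by blast
    have "dot (g ^ (s - 1) # replicate k 0) w = g ^ (s - 1) * w ! 0"
      unfolding dot_def by (simp add: sum.lessThan_Suc_shift del: sum.lessThan_Suc)
    also have "\<dots> = r * (g * g ^ (s - 1))" unfolding r by (simp add: ac_simps)
    finally show ?thesis using g_mult_bottom by simp
  qed
  then have "dot (g ^ (s - 1) # replicate k 0) ` {w. length w = Suc k \<and> set w \<subseteq> M} \<subseteq> {0}"
    by blast
  moreover have "replicate (Suc k) 0 \<in> {w. length w = Suc k \<and> set w \<subseteq> M}"
    using zero_in_M by (simp add: set_replicate_conv_if)
  then have "dot (g ^ (s - 1) # replicate k 0) ` {w. length w = Suc k \<and> set w \<subseteq> M} \<noteq> {}"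
    by blast
  ultimately show ?thesis unfolding subset_singleton_iff by blast
qed

lemma card_normed_vecs_dot_bottom_neq_0:
  "card {v\<in>normed_vecs (Suc k). dot (g ^ (s - 1) # replicate k 0) v \<noteq> 0} = q ^ (s * k)"
proof -
  have "\<exists>i<Suc k. (g ^ (s - 1) # replicate k 0) ! i \<noteq> 0"
    using bottom_neq_0 by (intro exI[of _ 0]) simp
  then show ?thesis using card_normed_vecs_dot_neq_0(2)[OF _ _ dot_bottom_M_vectors] by simp
qed

section \<open>The simplex code\<close>

lemma Sbeta_eq_image:
  assumes "k \<ge> 1"
  shows "Sbeta g s T k = (\<lambda>c. map (dot c) (cols (Gbeta g s T k))) ` {c. length c = k}"
proof -
  have G: "is_matrix k (Gbeta g s T k)"
    using Gbeta_columns[of "k - 1"] assms by simp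
  then have "length (Gbeta g s T k) = k" unfolding is_matrix_def by simp
  then have "Sbeta g s T k = (\<lambda>c. lincomb (ncols (Gbeta g s T k)) c (Gbeta g s T k)) ` {c. length c = k}"
    unfolding Sbeta_def rspan_def by auto
  also have "\<dots> = (\<lambda>c. map (dot c) (cols (Gbeta g s T k))) ` {c. length c = k}"
    using lincomb_eq_map_dot_cols[OF G] by (intro image_cong) simp_all
  finally show ?thesis .
qed

lemma inj_on_map_dot_normed_vecs:
  assumes "set CL = normed_vecs k"
  shows "inj_on (\<lambda>c. map (dot c) CL) {c. length c = k}"
proof (rule inj_onI, rule nth_equalityI)
  fix c c' assume c: "c \<in> {c. length c = k}" "c' \<in> {c. length c = k}"
    and eq: "map (dot c) CL = map (dot c') CL"
  then show "length c = length c'" by simp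
  fix i assume "i < length c"
  then have "(replicate k 0)[i := 1] \<in> set CL" using assms unit_vector_in_normed_vecs c by simp
  then have "dot c ((replicate k 0)[i := 1]) = dot c' ((replicate k 0)[i := 1])"
    using eq by (simp add: map_eq_conv)
  then show "c ! i = c' ! i" using dot_unit_vector[of i c] dot_unit_vector[of i c'] \<open>i < length c\<close> c by simp
qed

lemma card_Sbeta:
  assumes "k \<ge> 1"
  shows "card (Sbeta g s T k) = card (UNIV :: 'a set) ^ k"
proof -
  have "set (cols (Gbeta g s T k)) = normed_vecs k"
    using Gbeta_columns[of "k - 1"] assms by simp
  then have "card (Sbeta g s T k) = card {c :: 'a list. length c = k}"
    unfolding Sbeta_eq_image[OF assms] by (intro card_image inj_on_map_dot_normed_vecs)
  then show ?thesis by (simp add: card_lists_length)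
qed

lemma free_submodule_rank_Sbeta:
  assumes "k \<ge> 1"
  shows "free_submodule_rank (ncols (Gbeta g s T k)) (Sbeta g s T k) k"
  unfolding free_submodule_rank_def
proof (intro exI conjI)
  define G where "G = Gbeta g s T k"
  have G: "is_matrix k G" "set (cols G) = normed_vecs k"
    using Gbeta_columns[of "k - 1"] assms unfolding G_def by simp_all
  then show "length G = k" "\<forall>v\<in>set G. length v = ncols G" unfolding is_matrix_def by simp_all
  show "rspan (ncols G) G = Sbeta g s T k" unfolding Sbeta_def G_def ..
  show "lin_indep (ncols G) G" unfolding lin_indep_def
  proof (intro allI impI)
    fix c i assume c: "length c = length G \<and> lincomb (ncols G) c G = replicate (ncols G) 0"
      and i: "i < length G"
    have "length c = k" using c \<open>length G = k\<close> by simp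
    then have "map (dot c) (cols G) = lincomb (ncols G) c G"
      using lincomb_eq_map_dot_cols[OF G(1)] by simp
    also have "\<dots> = replicate (ncols G) 0" using c by simp
    also have "\<dots> = map (dot (replicate k 0)) (cols G)" by (simp add: map_replicate_const)
    finally have "map (dot c) (cols G) = map (dot (replicate k 0)) (cols G)" .
    then have "c = replicate k 0"
      by (rule inj_onD[OF inj_on_map_dot_normed_vecs[OF G(2)]]) (use \<open>length c = k\<close> in simp_all)
    then show "c ! i = 0" using i \<open>length G = k\<close> by simp
  qed
qed

lemma min_dist_Sbeta:
  assumes "k \<ge> 1"
  shows "min_dist (Sbeta g s T k) = q ^ (s * (k - 1))"
proof -
  define CL where "CL = cols (Gbeta g s T k)"
  have CL: "distinct CL" "set CL = normed_vecs k"
    using Gbeta_columns[of "k - 1"] assms unfolding CL_def by simp_all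
  have C: "Sbeta g s T k = (\<lambda>c. map (dot c) CL) ` {c. length c = k}"
    unfolding CL_def by (rule Sbeta_eq_image[OF assms])
  have distance: "hamming_dist (map (dot c) CL) (map (dot c') CL)
      = card {v\<in>normed_vecs k. dot c v \<noteq> dot c' v}" for c c'
    using hamming_dist_map_dot[OF CL(1)] CL(2) by simp
  show ?thesis
  proof (rule min_dist_eqI)
    show "finite (Sbeta g s T k)" unfolding C by (intro finite_imageI finite_lists_length)
  next
    fix x y assume "x \<in> Sbeta g s T k" "y \<in> Sbeta g s T k" "x \<noteq> y"
    then obtain c c' where cc: "x = map (dot c) CL" "y = map (dot c') CL" "length c = k" "length c' = k"
      unfolding C by blast
    with \<open>x \<noteq> y\<close> obtain v where "dot c v \<noteq> dot c' v" by (auto simp: map_eq_conv)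
    then have "\<exists>i<k. map2 (-) c c' ! i \<noteq> 0"
      using nonzero_entry_if_dot_neq_0[of "map2 (-) c c'" v] cc by (simp add: dot_map2_minus_left)
    then show "q ^ (s * (k - 1)) \<le> hamming_dist x y"
      using card_normed_vecs_dot_neq_0(1)[of "map2 (-) c c'" k] distance cc
      by (simp add: dot_map2_minus_left)
  next
    define c0 where "c0 = g ^ (s - 1) # replicate (k - 1) (0::'a)"
    show distance_c0: "hamming_dist (map (dot c0) CL) (map (dot (replicate k 0)) CL) = q ^ (s * (k - 1))"
      using card_normed_vecs_dot_bottom_neq_0[of "k - 1"] distance[of c0 "replicate k 0"] assms
      unfolding c0_def by simp
    show "map (dot c0) CL \<noteq> map (dot (replicate k 0)) CL"
    proof
      assume "map (dot c0) CL = map (dot (replicate k 0)) CL"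
      then have "hamming_dist (map (dot c0) CL) (map (dot (replicate k 0)) CL) = 0"
        unfolding hamming_dist_def by simp
      then show False using distance_c0 q_ge_2 by (simp del: length_greater_0_conv)
    qed
    show "map (dot c0) CL \<in> Sbeta g s T k" "map (dot (replicate k 0)) CL \<in> Sbeta g s T k"
      unfolding C c0_def using assms by (intro imageI; simp)+
  qed
qed

end

theorem proposition3p29:
  fixes \<gamma> :: "'a::{comm_ring_1, finite}" and s :: nat and T :: "'a list" and k :: nat
  assumes chain: "chain_ring TYPE('a)"
    and max: "maximal_ideal (pideal \<gamma>)"
    and nil: "\<gamma> ^ s = 0" and nil_min: "\<forall>t<s. \<gamma> ^ t \<noteq> 0"
    and reps: "coset_reps \<gamma> T"
    and T0: "T ! 0 = 0" and T1: "T ! 1 = 1"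
    and k: "k \<ge> 1"
  shows "int (ncols (Gbeta \<gamma> s T k)) =
           (\<Sum>i<code_rank (ncols (Gbeta \<gamma> s T k)) (Sbeta \<gamma> s T k).
              \<lceil>real (min_dist (Sbeta \<gamma> s T k)) / real (length T) ^ i\<rceil>)"
proof -
  interpret finite_chain_ring \<gamma> s T using max nil nil_min reps by unfold_locales
  have "card (UNIV :: 'a set) > 1"
    using card_UNIV one_less_power[of q s] q_ge_2 s_pos by simp
  then have "code_rank (ncols (Gbeta \<gamma> s T k)) (Sbeta \<gamma> s T k) = k"
    using free_submodule_rank_Sbeta[OF k] card_Sbeta[OF k] by (intro code_rank_eqI)
  moreover have "int (ncols (Gbeta \<gamma> s T k)) = (\<Sum>i<k. int (q ^ (s * (k - 1) - i)))"
    using ncols_Gbeta[of "k - 1"] k by simp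
  moreover have "int (q ^ (s * (k - 1) - i)) = \<lceil>real (q ^ (s * (k - 1))) / real q ^ i\<rceil>"
    if "i < k" for i
  proof (rule ceiling_power_divide_power[symmetric])
    show "q > 0" using q_ge_2 by linarith
    have "k - 1 \<le> s * (k - 1)" using s_pos by simp
    then show "i \<le> s * (k - 1)" using that by linarith
  qed
  ultimately show ?thesis using min_dist_Sbeta[OF k] by simp
qed

end
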